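(* Let $\mathfrak{o}$ be a compact discrete valuation ring with uniformizer $\pi$, maximal ideal $\mathfrak{p}$ and residue field $\mathbb{F}_q$, let $\mathfrak{o}_r=\mathfrak{o}/\mathfrak{p}^r$, $\mathfrak{g}=\mathfrak{sl}_n(\mathfrak{o})$ and $\mathfrak{g}_r=\mathfrak{sl}_n(\mathfrak{o}_r)$. Let $\kappa$ be the symmetric invariant $\mathfrak{o}$-bilinear form on $\mathfrak{g}$ fixed in the paper, assumed non-degenerate modulo $\mathfrak{p}$, and let $\kappa_1$ be the induced $\mathbb{F}_q$-bilinear form on $\mathfrak{g}_1=\mathfrak{sl}_n(\mathbb{F}_q)$. Let $r\in\mathbb{N}$, $e\in\mathfrak{g}_r$, let $b\in\mathfrak{g}_{r+1}$ be a shadow-preserving lift of $e$, let $x_c\in\mathfrak{g}_{r+1}$ with reduction $\bar{x}_c\in\mathfrak{g}_1$, and put $x=b+\pi^rx_c\in\mathfrak{g}_{r+1}$. Let $c$ be the linear functional $z\mapsto\kappa_1(\bar{x}_c,z)$ on $\mathrm{sh}_{\mathfrak{g}_r}(e)$, and let $$\mathrm{stab}_{\mathrm{sh}_{\mathfrak{g}_r}(e)}(c)=\{y\in\mathrm{sh}_{\mathfrak{g}_r}(e) : c([y,z])=0\ \text{for all } z\in\mathrm{sh}_{\mathfrak{g}_r}(e)\}.$$ Then $\mathrm{stab}_{\mathrm{sh}_{\mathfrak{g}_r}(e)}(c)=\mathrm{sh}_{\mathfrak{g}_{r+1}}(x)$.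
   Context: Lie shadow: for $a\in\mathfrak{g}_r$, $\mathrm{sh}_{\mathfrak{g}_r}(a)$ is the image in $\mathfrak{g}_1$ of the centralizer $C_{\mathfrak{g}_r}(a)$ under reduction modulo $\mathfrak{p}$. A lift $b\in\mathfrak{g}_{r+1}$ of $e\in\mathfrak{g}_r$ (i.e. $b$ reduces to $e$ modulo $\mathfrak{p}^r$) is shadow-preserving if $\mathrm{sh}_{\mathfrak{g}_{r+1}}(b)=\mathrm{sh}_{\mathfrak{g}_r}(e)$. *)

theory Defs
  imports "HOL-Analysis.Determinants"
begin

text \<open>The ring o is modelled as an integral domain of type 'a together with a
uniformizer \<pi>.  Matrices are 'a^'n^'n for a finite index type 'n (n = CARD('n)).
Elements of g_r = sl_n(o/p^r) are represented by trace-zero lifts in sl_n(o),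
compared modulo \<pi>^r entrywise.\<close>

definition is_dvr_uniformizer :: "'a::idom \<Rightarrow> bool" where
  "is_dvr_uniformizer \<pi> \<longleftrightarrow> \<pi> \<noteq> 0 \<and> \<not> \<pi> dvd 1 \<and>
     (\<forall>x. x \<noteq> 0 \<longrightarrow> (\<exists>u k. u dvd 1 \<and> x = u * \<pi> ^ k))"

text \<open>Compactness of o: finite residue field and \<pi>-adic completeness
(Hausdorffness follows from the DVR property).\<close>
definition compact_dvr :: "'a::idom \<Rightarrow> bool" where
  "compact_dvr \<pi> \<longleftrightarrow> is_dvr_uniformizer \<pi>
     \<and> (\<exists>F. finite F \<and> (\<forall>x. \<exists>y\<in>F. \<pi> dvd (x - y)))
     \<and> (\<forall>f :: nat \<Rightarrow> 'a. (\<forall>m. \<pi> ^ m dvd (f (Suc m) - f m))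
            \<longrightarrow> (\<exists>l. \<forall>m. \<pi> ^ m dvd (l - f m)))"

definition sl :: "('a::comm_ring_1^'n^'n) set" where
  "sl = {A. trace A = 0}"

definition bracket :: "'a::comm_ring_1^'n^'n \<Rightarrow> 'a^'n^'n \<Rightarrow> 'a^'n^'n" where
  "bracket A B = A ** B - B ** A"

definition smat :: "'a::comm_ring_1 \<Rightarrow> 'a^'n^'n \<Rightarrow> 'a^'n^'n" where
  "smat c A = (\<chi> i j. c * A $ i $ j)"

definition mat_cong :: "'a::comm_ring_1 \<Rightarrow> nat \<Rightarrow> 'a^'n^'n \<Rightarrow> 'a^'n^'n \<Rightarrow> bool" where
  "mat_cong \<pi> k A B \<longleftrightarrow> (\<forall>i j. \<pi> ^ k dvd (A $ i $ j - B $ i $ j))"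

text \<open>Lie shadow sh_{g_k}(a) for a in g_k represented by A in sl_n(o):
the set of all lifts in sl_n(o) of elements of the image in g_1 of the
centralizer C_{g_k}(a).  This set is saturated under congruence mod \<pi>,
so it faithfully represents a subset of g_1.\<close>
definition shadow :: "'a::comm_ring_1 \<Rightarrow> nat \<Rightarrow> 'a^'n^'n \<Rightarrow> ('a^'n^'n) set" where
  "shadow \<pi> k A = {Z \<in> sl. \<exists>Y \<in> sl. mat_cong \<pi> k (bracket Y A) 0 \<and> mat_cong \<pi> 1 Z Y}"

definition good_form :: "'a::comm_ring_1 \<Rightarrow> ('a^'n^'n \<Rightarrow> 'a^'n^'n \<Rightarrow> 'a) \<Rightarrow> bool" where
  "good_form \<pi> \<kappa> \<longleftrightarrow>
     (\<forall>X\<in>sl. \<forall>Y\<in>sl. \<forall>Z\<in>sl. \<kappa> (X + Y) Z = \<kappa> X Z + \<kappa> Y Z)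
   \<and> (\<forall>a. \<forall>X\<in>sl. \<forall>Z\<in>sl. \<kappa> (smat a X) Z = a * \<kappa> X Z)
   \<and> (\<forall>X\<in>sl. \<forall>Y\<in>sl. \<kappa> X Y = \<kappa> Y X)
   \<and> (\<forall>X\<in>sl. \<forall>Y\<in>sl. \<forall>Z\<in>sl. \<kappa> (bracket X Y) Z = \<kappa> X (bracket Y Z))
   \<and> (\<forall>X\<in>sl. (\<forall>Y\<in>sl. \<pi> dvd \<kappa> X Y) \<longrightarrow> mat_cong \<pi> 1 X 0)"

end

theory Submission
  imports Defs
begin

text \<open>The inclusion sh(x) \<subseteq> stab(c) is a direct computation with the invariance of \<kappa>.
  Conversely, for Y in the stabilizer take a lift Y1 with [Y1, b] \<equiv> 0 mod \<pi>^(r+1); it has to be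
  corrected to Y1 + \<pi> W with [Y1 + \<pi> W, x] \<equiv> 0 mod \<pi>^(r+1), i.e. one has to solve
  [W, b] \<equiv> \<pi>^(r-1) [x_c, Y1] mod \<pi>^r. Because ad b is skew-adjoint for the form \<kappa>, which is
  non-degenerate modulo \<pi>, the image of ad b modulo \<pi>^r contains \<pi>^(r-1) T for every T that is
  \<kappa>-orthogonal modulo \<pi> to the kernel of ad b modulo \<pi>^r; this is proved by diagonalizing
  ad b over the valuation ring. The stabilizer condition on Y says exactly that T = [x_c, Y1]
  has this orthogonality property, since the kernel of ad b modulo \<pi>^r consists of lifts of
  the shadow sh(e).\<close>

section \<open>Diagonalization over rings with totally ordered divisibility\<close>

lemma matrix_mult_entry: "(A ** B) $ i $ j = (\<Sum>k\<in>UNIV. A $ i $ k * B $ k $ j)"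
  by (simp add: matrix_matrix_mult_def)

lemma matrix_vector_mult_entry: "(A *v x) $ i = (\<Sum>k\<in>UNIV. A $ i $ k * x $ k)"
  by (simp add: matrix_vector_mult_def)

lemma vector_matrix_mult_entry: "(x v* A) $ j = (\<Sum>k\<in>UNIV. x $ k * A $ k $ j)"
  by (simp add: vector_matrix_mult_def)

lemma matrix_add_rdistrib: "((A::'a::comm_ring_1^'n^'m) + B) ** C = A ** C + B ** C"
  by (simp add: vec_eq_iff matrix_mult_entry distrib_right sum.distrib)

lemma matrix_diff_rdistrib: "((A::'a::comm_ring_1^'n^'m) - B) ** C = A ** C - B ** C"
  by (simp add: vec_eq_iff matrix_mult_entry left_diff_distrib sum_subtractf)

lemma matrix_diff_ldistrib: "(A::'a::comm_ring_1^'n^'m) ** (B - C) = A ** B - A ** C"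
  by (simp add: vec_eq_iff matrix_mult_entry right_diff_distrib sum_subtractf)

lemma sum_delta_mult_left:
  "(\<Sum>k\<in>(UNIV::'b::finite set). (if k = a \<and> P then c else 0) * f k) = (if P then c * f a else (0::'a::comm_semiring_1))"
proof -
  have "(\<Sum>k\<in>UNIV. (if k = a \<and> P then c else 0) * f k) = (\<Sum>k\<in>UNIV. if k = a then (if P then c * f k else 0) else 0)"
    by (rule sum.cong) auto
  then show ?thesis by simp
qed

lemma sum_delta_mult_right:
  "(\<Sum>k\<in>(UNIV::'b::finite set). f k * (if k = a \<and> P then c else 0)) = (if P then f a * c else (0::'a::comm_semiring_1))"
  using sum_delta_mult_left[of a P c f] by (simp add: mult.commute)

lemma invertible_mat_1_minus_square_zero:
  fixes N :: "'a::comm_ring_1^'m^'m"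
  assumes "N ** N = 0"
  shows "invertible (mat 1 - N)"
proof -
  have "(mat 1 - N) ** (mat 1 + N) = mat 1"
    by (simp add: matrix_add_ldistrib matrix_diff_rdistrib assms)
  moreover have "(mat 1 + N) ** (mat 1 - N) = mat 1"
    by (simp add: matrix_diff_ldistrib matrix_add_rdistrib assms)
  ultimately show ?thesis unfolding invertible_def by blast
qed

lemma invertible_column_transposition:
  fixes A :: "'a::comm_ring_1^'m::finite^'m"
  obtains S where "invertible S" "\<And>i j. (A ** S) $ i $ j = A $ i $ Transposition.transpose p q j"
proof
  define S :: "'a^'m^'m" where "S = (\<chi> i j. if i = Transposition.transpose p q j then 1 else 0)"
  have "(S ** S) $ i $ j = mat 1 $ i $ j" for i j
  proof -
    have "(S ** S) $ i $ j
        = (\<Sum>k\<in>UNIV. if k = Transposition.transpose p q j then (if i = Transposition.transpose p q k then 1 else 0) else 0)"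
      unfolding matrix_mult_entry by (intro sum.cong) (auto simp: S_def)
    then show ?thesis by (auto simp: mat_def)
  qed
  then have "S ** S = mat 1" by (simp add: vec_eq_iff)
  then show "invertible S" unfolding invertible_def by blast
  show "(A ** S) $ i $ j = A $ i $ Transposition.transpose p q j" for i j
    by (simp add: S_def matrix_mult_entry if_distrib cong: if_cong)
qed

definition diagonal_mat :: "'a::zero^'m^'m \<Rightarrow> bool" where
  "diagonal_mat D \<longleftrightarrow> (\<forall>i j. i \<noteq> j \<longrightarrow> D $ i $ j = 0)"

definition diagonal_outside :: "'m set \<Rightarrow> 'a::zero^'m^'m \<Rightarrow> bool" where
  "diagonal_outside I A \<longleftrightarrow> (\<forall>i j. i \<noteq> j \<and> (i \<notin> I \<or> j \<notin> I) \<longrightarrow> A $ i $ j = 0)"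

lemma dvd_total_finite_has_least:
  fixes S :: "'a::comm_semiring_1 set"
  assumes tot: "\<And>a b::'a. a dvd b \<or> b dvd a" and "finite S" "S \<noteq> {}"
  shows "\<exists>s\<in>S. \<forall>t\<in>S. s dvd t"
  using assms(2,3)
proof (induction S rule: finite_ne_induct)
  case (insert x F)
  then obtain s where s: "s \<in> F" "\<forall>t\<in>F. s dvd t" by auto
  show ?case
    using tot[of s x] s by (auto intro: dvd_trans)
qed auto

lemma clear_pivot_row_column:
  fixes A :: "'a::comm_ring_1^'m::finite^'m"
  assumes off: "diagonal_outside I A" and p: "p \<in> I"
    and col: "\<And>i. i \<in> I \<Longrightarrow> A $ p $ p dvd A $ i $ p"
    and row: "\<And>j. j \<in> I \<Longrightarrow> A $ p $ p dvd A $ p $ j"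
  shows "\<exists>L R :: 'a^'m^'m. invertible L \<and> invertible R \<and> diagonal_outside (I - {p}) (L ** A ** R)"
proof -
  have "\<forall>i\<in>I. \<exists>c. A $ i $ p = c * A $ p $ p" using col by (auto simp: dvd_def mult.commute)
  then obtain c where c: "\<And>i. i \<in> I \<Longrightarrow> A $ i $ p = c i * A $ p $ p" by metis
  have "\<forall>j\<in>I. \<exists>f. A $ p $ j = A $ p $ p * f" using row by (auto simp: dvd_def)
  then obtain f where f: "\<And>j. j \<in> I \<Longrightarrow> A $ p $ j = A $ p $ p * f j" by metis
  define N :: "'a^'m^'m" where "N = (\<chi> i j. if j = p \<and> i \<in> I \<and> i \<noteq> p then c i else 0)"
  define N' :: "'a^'m^'m" where "N' = (\<chi> i j. if i = p \<and> j \<in> I \<and> j \<noteq> p then f j else 0)"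
  have "N ** N = 0" "N' ** N' = 0"
    unfolding N_def N'_def by (auto simp: vec_eq_iff matrix_mult_entry intro!: sum.neutral)
  then have inv: "invertible (mat 1 - N)" "invertible (mat 1 - N')"
    by (simp_all add: invertible_mat_1_minus_square_zero)
  define A2 where "A2 = (mat 1 - N) ** A"
  have A2: "A2 $ i $ j = A $ i $ j - (if i \<in> I \<and> i \<noteq> p then c i * A $ p $ j else 0)" for i j
    unfolding A2_def matrix_diff_rdistrib by (simp add: N_def matrix_mult_entry sum_delta_mult_left)
  define A3 where "A3 = A2 ** (mat 1 - N')"
  have A3: "A3 $ i $ j = A2 $ i $ j - (if j \<in> I \<and> j \<noteq> p then A2 $ i $ p * f j else 0)" for i j
    unfolding A3_def matrix_diff_ldistrib by (simp add: N'_def matrix_mult_entry sum_delta_mult_right)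
  have off_A: "A $ i $ j = 0" if "i \<noteq> j" "i \<notin> I \<or> j \<notin> I" for i j
    using off that unfolding diagonal_outside_def by blast
  have A2_col: "A2 $ i $ p = (if i = p then A $ p $ p else 0)" for i
  proof -
    consider "i = p" | "i \<in> I" "i \<noteq> p" | "i \<notin> I" by blast
    then show ?thesis
    proof cases
      case 2 then show ?thesis by (simp add: A2 c)
    next
      case 3 then show ?thesis using off_A[of i p] p by (auto simp: A2)
    qed (simp add: A2)
  qed
  have "A3 $ i $ j = 0" if ij: "i \<noteq> j" "i \<notin> I - {p} \<or> j \<notin> I - {p}" for i j
  proof (cases "i = p")
    case True
    then have "j \<noteq> p" using ij by auto
    then show ?thesis
      using True off_A[of p j] f[of j] by (cases "j \<in> I") (simp_all add: A3 A2 A2_col)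
  next
    case False
    then show ?thesis
      using ij p off_A[of i j] off_A[of i p] off_A[of p j] c[of i]
      by (cases "j = p") (auto simp: A3 A2 A2_col)
  qed
  then have "diagonal_outside (I - {p}) A3" unfolding diagonal_outside_def by blast
  moreover have "A3 = (mat 1 - N) ** A ** (mat 1 - N')"
    unfolding A3_def A2_def ..
  ultimately show ?thesis using inv by blast
qed

lemma diagonal_outside_shrink:
  fixes A :: "'a::comm_ring_1^'m::finite^'m"
  assumes tot: "\<And>a b::'a. a dvd b \<or> b dvd a"
    and off: "diagonal_outside I A" and nd: "\<not> diagonal_mat A"
  shows "\<exists>p\<in>I. \<exists>L R :: 'a^'m^'m. invertible L \<and> invertible R \<and> diagonal_outside (I - {p}) (L ** A ** R)"
proof -
  obtain i0 j0 where "i0 \<noteq> j0" "A $ i0 $ j0 \<noteq> 0"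
    using nd unfolding diagonal_mat_def by auto
  with off have "i0 \<in> I" "j0 \<in> I" unfolding diagonal_outside_def by auto
  then have "\<exists>s\<in>(\<lambda>(i,j). A $ i $ j) ` (I \<times> I). \<forall>t\<in>(\<lambda>(i,j). A $ i $ j) ` (I \<times> I). s dvd t"
    by (intro dvd_total_finite_has_least[OF tot]) auto
  then obtain p q where pq: "p \<in> I" "q \<in> I"
    and least: "\<And>i j. i \<in> I \<Longrightarrow> j \<in> I \<Longrightarrow> A $ p $ q dvd A $ i $ j"
    by auto
  define \<sigma> where "\<sigma> = Transposition.transpose p q"
  have \<sigma>_I: "\<sigma> x \<in> I \<longleftrightarrow> x \<in> I" "x \<notin> I \<Longrightarrow> \<sigma> x = x" for x
    using pq by (auto simp: \<sigma>_def Transposition.transpose_def)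
  obtain S where S: "invertible S" "\<And>i j. (A ** S) $ i $ j = A $ i $ \<sigma> j"
    using invertible_column_transposition[of A p q] unfolding \<sigma>_def by metis
  have "diagonal_outside I (A ** S)"
    using off \<sigma>_I unfolding diagonal_outside_def S(2) by metis
  moreover have "(A ** S) $ p $ p dvd (A ** S) $ i $ j" if "i \<in> I" "j \<in> I" for i j
    using least that \<sigma>_I by (simp add: S(2) \<sigma>_def)
  ultimately obtain L R where LR: "invertible L" "invertible R"
    "diagonal_outside (I - {p}) (L ** (A ** S) ** R)"
    using clear_pivot_row_column[of I "A ** S" p] pq by blast
  have "invertible (S ** R)" by (intro invertible_mult S(1) LR(2))
  moreover have "L ** A ** (S ** R) = L ** (A ** S) ** R" by (simp add: matrix_mul_assoc)
  ultimately show ?thesis using LR pq by metis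
qed

lemma diagonalization_dvd_total:
  fixes A :: "'a::comm_ring_1^'m::finite^'m"
  assumes tot: "\<And>a b::'a. a dvd b \<or> b dvd a"
  obtains L R :: "'a^'m^'m" where "invertible L" "invertible R" "diagonal_mat (L ** A ** R)"
proof -
  have "diagonal_outside I A \<Longrightarrow> \<exists>L R :: 'a^'m^'m. invertible L \<and> invertible R \<and> diagonal_mat (L ** A ** R)" for I
  proof (induction "card I" arbitrary: I A rule: less_induct)
    case less
    show ?case
    proof (cases "diagonal_mat A")
      case True
      have "invertible (mat 1 :: 'a^'m^'m)" by (auto simp: invertible_def)
      moreover have "diagonal_mat (mat 1 ** A ** mat 1)" using True by simp
      ultimately show ?thesis by blast
    next
      case False
      then obtain p L R where p: "p \<in> I" and LR: "invertible L" "invertible R"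
        "diagonal_outside (I - {p}) (L ** A ** R)"
        using diagonal_outside_shrink[OF tot less.prems] by blast
      have "card (I - {p}) < card I" by (rule card_Diff1_less) (simp_all add: p)
      then obtain L' R' :: "'a^'m^'m" where L'R': "invertible L'" "invertible R'"
        "diagonal_mat (L' ** (L ** A ** R) ** R')"
        using less.hyps LR(3) by blast
      have "L' ** (L ** A ** R) ** R' = (L' ** L) ** A ** (R ** R')"
        by (simp add: matrix_mul_assoc)
      then show ?thesis using L'R' LR by (metis invertible_mult)
    qed
  qed
  moreover have "diagonal_outside UNIV A" by (simp add: diagonal_outside_def)
  ultimately show ?thesis using that by blast
qed

section \<open>Discrete valuation rings\<close>

lemma unit_mult_dvd_self:
  assumes "u dvd (1::'a::comm_ring_1)" shows "u * x dvd x"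
  using assms by (metis mult_1_left mult_dvd_mono dvd_refl)

lemma uniformizer_not_dvd_unit:
  assumes "is_dvr_uniformizer \<pi>" "u dvd 1"
  shows "\<not> \<pi> dvd u"
  using assms dvd_trans unfolding is_dvr_uniformizer_def by blast

lemma uniformizer_dvd_total:
  fixes \<pi> a b :: "'a::idom"
  assumes "is_dvr_uniformizer \<pi>"
  shows "a dvd b \<or> b dvd a"
proof (cases "a = 0 \<or> b = 0")
  case False
  then obtain u k v m where uv: "u dvd 1" "a = u * \<pi> ^ k" "v dvd 1" "b = v * \<pi> ^ m"
    using assms unfolding is_dvr_uniformizer_def by metis
  have "u * \<pi> ^ k dvd v * \<pi> ^ m" if "k \<le> m" "u dvd 1" for u v k m
  proof -
    have "u * \<pi> ^ k dvd \<pi> ^ k" by (rule unit_mult_dvd_self[OF \<open>u dvd 1\<close>])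
    also have "\<pi> ^ k dvd \<pi> ^ m" using \<open>k \<le> m\<close> by (rule le_imp_power_dvd)
    finally show ?thesis by simp
  qed
  then show ?thesis using uv by (cases "k \<le> m") auto
qed auto

lemma uniformizer_prime:
  assumes "is_dvr_uniformizer (\<pi>::'a::idom)" "\<pi> dvd a * b"
  shows "\<pi> dvd a \<or> \<pi> dvd b"
proof (cases "a = 0 \<or> b = 0")
  case False
  then obtain u k v m where uv: "u dvd 1" "a = u * \<pi> ^ k" "v dvd 1" "b = v * \<pi> ^ m"
    using assms(1) unfolding is_dvr_uniformizer_def by metis
  show ?thesis
  proof (cases "k = 0 \<and> m = 0")
    case True
    then have "a * b dvd 1" using uv by (simp add: mult_dvd_mono[of u 1 v 1, simplified])
    then show ?thesis using assms dvd_trans unfolding is_dvr_uniformizer_def by blast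
  next
    case False
    then show ?thesis using uv by (auto intro: dvd_mult dvd_power)
  qed
qed auto

lemma uniformizer_power_unit_of_not_dvd:
  assumes "is_dvr_uniformizer (\<pi>::'a::idom)" "\<not> \<pi> ^ r dvd d"
  obtains c a where "c dvd 1" "d = c * \<pi> ^ a" "a < r"
proof -
  have "d \<noteq> 0" using assms(2) by auto
  then obtain c a where ca: "c dvd 1" "d = c * \<pi> ^ a"
    using assms(1) unfolding is_dvr_uniformizer_def by metis
  have "\<not> r \<le> a"
    using assms(2) ca(2) le_imp_power_dvd dvd_mult by metis
  then show ?thesis using that[OF ca] by simp
qed

lemma uniformizer_dvd_of_power_dvd_mult:
  assumes dvr: "is_dvr_uniformizer (\<pi>::'a::idom)" and d: "\<not> \<pi> ^ r dvd d" and dh: "\<pi> ^ r dvd d * h"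
  shows "\<pi> dvd h"
proof -
  obtain c a where ca: "c dvd 1" "d = c * \<pi> ^ a" "a < r"
    using uniformizer_power_unit_of_not_dvd[OF dvr d] .
  have ne: "\<pi> \<noteq> 0" using dvr unfolding is_dvr_uniformizer_def by simp
  have "\<pi> ^ a * \<pi> ^ (r - a) dvd \<pi> ^ a * (c * h)"
    using dh ca by (simp add: power_add[symmetric] mult_ac)
  then have "\<pi> ^ (r - a) dvd c * h" using ne by simp
  moreover have "\<pi> dvd \<pi> ^ (r - a)" using ca(3) by simp
  ultimately have "\<pi> dvd c \<or> \<pi> dvd h" using uniformizer_prime[OF dvr] dvd_trans by blast
  then show ?thesis using uniformizer_not_dvd_unit[OF dvr ca(1)] by blast
qed

lemma dvd_power_pred_of_not_power_dvd:
  assumes "is_dvr_uniformizer (\<pi>::'a::idom)" "\<not> \<pi> ^ r dvd d"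
  shows "d dvd \<pi> ^ (r - 1)"
proof -
  obtain c a where ca: "c dvd 1" "d = c * \<pi> ^ a" "a < r"
    using uniformizer_power_unit_of_not_dvd[OF assms] .
  have "d dvd \<pi> ^ a" using ca by (simp add: unit_mult_dvd_self)
  also have "\<pi> ^ a dvd \<pi> ^ (r - 1)" using ca(3) by (simp add: le_imp_power_dvd)
  finally show ?thesis .
qed

section \<open>Skew-adjoint matrices modulo powers of the uniformizer\<close>

definition vec_dvd :: "'a::comm_ring_1 \<Rightarrow> 'a^'m \<Rightarrow> bool" where
  "vec_dvd m v \<longleftrightarrow> (\<forall>i. m dvd v $ i)"

definition dotp :: "'a::comm_ring_1^'m \<Rightarrow> 'a^'m \<Rightarrow> 'a" where
  "dotp x y = (\<Sum>i\<in>UNIV. x $ i * y $ i)"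

lemma vec_dvd_matrix_vector_mult: "vec_dvd m v \<Longrightarrow> vec_dvd m (M *v v)"
  unfolding vec_dvd_def by (auto simp: matrix_vector_mult_entry intro!: dvd_sum dvd_mult)

lemma vec_dvd_vector_matrix_mult: "vec_dvd m v \<Longrightarrow> vec_dvd m (v v* M)"
  unfolding vec_dvd_def by (auto simp: vector_matrix_mult_entry intro!: dvd_sum dvd_mult2)

lemma vec_dvd_scalar_mult: "m dvd c \<Longrightarrow> vec_dvd m (c *s v)"
  unfolding vec_dvd_def by auto

lemma matrix_vector_mult_scalar: "(M::'a::comm_ring_1^'n^'m) *v (c *s x) = c *s (M *v x)"
  by (simp add: vec_eq_iff matrix_vector_mult_entry sum_distrib_left mult_ac)

lemma vector_matrix_mult_scalar: "(c *s x) v* (M::'a::comm_ring_1^'n^'m) = c *s (x v* M)"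
  by (simp add: vec_eq_iff vector_matrix_mult_entry sum_distrib_left mult_ac)

lemma dotp_commute: "dotp x y = dotp y x"
  unfolding dotp_def by (simp add: mult.commute)

lemma dotp_matrix_vector_mult: "dotp x ((M::'a::comm_ring_1^'n^'m) *v y) = dotp (x v* M) y"
proof -
  have "dotp x (M *v y) = (\<Sum>i\<in>UNIV. \<Sum>j\<in>UNIV. x $ i * M $ i $ j * y $ j)"
    by (simp add: dotp_def matrix_vector_mult_entry sum_distrib_left mult_ac)
  also have "\<dots> = (\<Sum>j\<in>UNIV. \<Sum>i\<in>UNIV. x $ i * M $ i $ j * y $ j)" by (rule sum.swap)
  also have "\<dots> = dotp (x v* M) y"
    by (simp add: dotp_def vector_matrix_mult_entry sum_distrib_left sum_distrib_right mult_ac)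
  finally show ?thesis .
qed

lemma matrix_vector_mult_axis: "(M *v axis k 1) $ i = M $ i $ k"
  unfolding matrix_vector_mult_entry axis_def by (simp add: if_distrib cong: if_cong)

lemma dotp_axis_right: "dotp x (axis k 1) = x $ k"
  unfolding dotp_def axis_def by (simp add: if_distrib cong: if_cong)

lemma dotp_axis_left: "dotp (axis k 1) x = x $ k"
  using dotp_axis_right dotp_commute by metis

lemma dotp_scalar_mult_left: "dotp (c *s x) y = c * dotp x y"
  unfolding dotp_def by (simp add: sum_distrib_left mult_ac)

lemma dotp_scalar_mult_right: "dotp x (c *s y) = c * dotp x y"
  unfolding dotp_def by (simp add: sum_distrib_left mult_ac)

lemma dotp_dvd_left: "vec_dvd m x \<Longrightarrow> m dvd dotp x y"
  unfolding dotp_def vec_dvd_def by (auto intro!: dvd_sum dvd_mult2)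

lemma diagonal_matrix_vector_mult: "diagonal_mat D \<Longrightarrow> (D *v v) $ i = D $ i $ i * v $ i"
proof -
  assume "diagonal_mat D"
  then have "(\<Sum>k\<in>UNIV. D $ i $ k * v $ k) = (\<Sum>k\<in>UNIV. if k = i then D $ i $ i * v $ i else 0)"
    unfolding diagonal_mat_def by (intro sum.cong) auto
  then show ?thesis by (simp add: matrix_vector_mult_entry)
qed

lemma diagonal_vector_matrix_mult: "diagonal_mat D \<Longrightarrow> (v v* D) $ i = v $ i * D $ i $ i"
proof -
  assume "diagonal_mat D"
  then have "(\<Sum>k\<in>UNIV. v $ k * D $ k $ i) = (\<Sum>k\<in>UNIV. if k = i then v $ i * D $ i $ i else 0)"
    unfolding diagonal_mat_def by (intro sum.cong) auto
  then show ?thesis by (simp add: vector_matrix_mult_entry)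
qed

lemma invertibleE:
  assumes "invertible (P::'a::comm_ring_1^'m^'m)"
  obtains P' where "P ** P' = mat 1" "P' ** P = mat 1"
  using assms unfolding invertible_def by blast

text \<open>After diagonalization both conditions say that some pivot is divisible by \<pi>.\<close>
lemma left_kernel_mod_uniformizer:
  fixes M :: "'a::idom^'m::finite^'m"
  assumes dvr: "is_dvr_uniformizer \<pi>" and Mu: "vec_dvd \<pi> (M *v u)" and u: "\<not> vec_dvd \<pi> u"
  obtains x where "\<not> vec_dvd \<pi> x" "vec_dvd \<pi> (x v* M)"
proof -
  obtain L R :: "'a^'m^'m" where LR: "invertible L" "invertible R" "diagonal_mat (L ** M ** R)"
    using diagonalization_dvd_total[OF uniformizer_dvd_total[OF dvr]] by blast
  define D where "D = L ** M ** R"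
  obtain L' where L': "L ** L' = mat 1" "L' ** L = mat 1" using invertibleE[OF LR(1)] .
  obtain R' where R': "R ** R' = mat 1" "R' ** R = mat 1" using invertibleE[OF LR(2)] .
  define q where "q = R' *v u"
  have "\<not> vec_dvd \<pi> q"
  proof
    assume "vec_dvd \<pi> q"
    moreover have "R *v q = u" by (simp add: q_def matrix_vector_mul_assoc R'(1))
    ultimately show False using u vec_dvd_matrix_vector_mult by metis
  qed
  then obtain k where k: "\<not> \<pi> dvd q $ k" unfolding vec_dvd_def by auto
  have "D *v q = L *v (M *v u)"
    by (simp add: D_def q_def matrix_vector_mul_assoc matrix_mul_assoc[symmetric] R'(1))
  then have "\<pi> dvd D $ k $ k * q $ k"
    using vec_dvd_matrix_vector_mult[OF Mu, of L] diagonal_matrix_vector_mult[OF LR(3)]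
    unfolding vec_dvd_def D_def by metis
  then have Dk: "\<pi> dvd D $ k $ k" using uniformizer_prime[OF dvr] k by blast
  define x where "x = axis k 1 v* L"
  have "x v* M = (axis k 1 v* D) v* R'"
    by (simp add: x_def D_def vector_matrix_mul_assoc matrix_mul_assoc[symmetric] R'(1))
  also have "axis k 1 v* D = D $ k $ k *s axis k 1"
    using diagonal_vector_matrix_mult[OF LR(3)] by (simp add: vec_eq_iff axis_def D_def)
  finally have "vec_dvd \<pi> (x v* M)"
    using Dk by (simp add: vector_matrix_mult_scalar vec_dvd_scalar_mult)
  moreover have "\<not> vec_dvd \<pi> x"
  proof
    assume "vec_dvd \<pi> x"
    moreover have "x v* L' = axis k 1" by (simp add: x_def vector_matrix_mul_assoc L'(1))
    ultimately have "\<pi> dvd (axis k 1 :: 'a^'m) $ k"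
      using vec_dvd_vector_matrix_mult unfolding vec_dvd_def by metis
    then show False using dvr unfolding is_dvr_uniformizer_def by simp
  qed
  ultimately show ?thesis using that by blast
qed

text \<open>M is H on the block outside S \<times> S, padded with the identity on S, so its kernel and
  left kernel modulo \<pi> come from that block.\<close>
lemma block_left_kernel_mod_uniformizer:
  fixes H :: "'a::idom^'m::finite^'m"
  assumes dvr: "is_dvr_uniformizer \<pi>"
    and block: "\<And>i j. i \<notin> S \<Longrightarrow> j \<in> S \<Longrightarrow> \<pi> dvd H $ i $ j"
    and ker: "\<And>i. i \<notin> S \<Longrightarrow> \<pi> dvd (H *v u) $ i"
    and k: "k \<notin> S" "\<not> \<pi> dvd u $ k"
  obtains x where "\<not> vec_dvd \<pi> x" "vec_dvd \<pi> (x v* H)"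
proof -
  define u' where "u' = (\<chi> j. if j \<notin> S then u $ j else 0)"
  define M where "M = (\<chi> i j. if i \<notin> S \<and> j \<notin> S then H $ i $ j else if i = j then 1 else (0::'a))"
  have "\<pi> dvd (M *v u') $ i" for i
  proof (cases "i \<in> S")
    case True
    then have "(M *v u') $ i = 0"
      unfolding matrix_vector_mult_entry by (intro sum.neutral) (auto simp: M_def u'_def)
    then show ?thesis by simp
  next
    case False
    have "(H *v u) $ i - (M *v u') $ i = (\<Sum>j\<in>UNIV. if j \<in> S then H $ i $ j * u $ j else 0)"
      unfolding matrix_vector_mult_entry sum_subtractf[symmetric]
      using False by (intro sum.cong) (auto simp: M_def u'_def)
    then have "(M *v u') $ i = (H *v u) $ i - (\<Sum>j\<in>UNIV. if j \<in> S then H $ i $ j * u $ j else 0)"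
      by (simp add: algebra_simps)
    moreover have "\<pi> dvd (\<Sum>j\<in>UNIV. if j \<in> S then H $ i $ j * u $ j else 0)"
      by (rule dvd_sum) (simp add: block[OF False])
    ultimately show ?thesis using ker[OF False] by simp
  qed
  then have "vec_dvd \<pi> (M *v u')" unfolding vec_dvd_def ..
  moreover have "\<not> vec_dvd \<pi> u'" using k by (auto simp: vec_dvd_def u'_def)
  ultimately obtain x0 where x0: "\<not> vec_dvd \<pi> x0" "vec_dvd \<pi> (x0 v* M)"
    by (rule left_kernel_mod_uniformizer[OF dvr])
  have x0_S: "\<pi> dvd x0 $ i" if "i \<in> S" for i
  proof -
    have "(x0 v* M) $ i = x0 $ i"
      unfolding vector_matrix_mult_entry using that by (simp add: M_def if_distrib cong: if_cong)
    then show ?thesis using x0(2) unfolding vec_dvd_def by metis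
  qed
  define x where "x = (\<chi> i. if i \<notin> S then x0 $ i else 0)"
  have not_dvd: "\<not> vec_dvd \<pi> x"
  proof
    assume x: "vec_dvd \<pi> x"
    have "\<pi> dvd x0 $ i" for i
    proof -
      have "\<pi> dvd x $ i" using x unfolding vec_dvd_def ..
      then show ?thesis using x0_S by (cases "i \<in> S") (simp_all add: x_def)
    qed
    then show False using x0(1) unfolding vec_dvd_def by blast
  qed
  have "\<pi> dvd (x v* H) $ j" for j
  proof (cases "j \<in> S")
    case True
    have "\<pi> dvd x $ i * H $ i $ j" for i
      using block[OF _ True, of i] by (cases "i \<in> S") (simp_all add: x_def)
    then show ?thesis unfolding vector_matrix_mult_entry by (simp add: dvd_sum)
  next
    case False
    have "(x v* H) $ j = (x0 v* M) $ j"
      unfolding vector_matrix_mult_entry using False by (intro sum.cong) (auto simp: x_def M_def)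
    moreover have "\<pi> dvd (x0 v* M) $ j" using x0(2) unfolding vec_dvd_def ..
    ultimately show ?thesis by simp
  qed
  then have "vec_dvd \<pi> (x v* H)" unfolding vec_dvd_def ..
  with not_dvd show ?thesis by (rule that)
qed

lemma matrix_vector_mult_diagonalized:
  assumes "L' ** L = mat 1"
  shows "A *v (R *v x) = L' *v ((L ** A ** R) *v x)"
  using assms by (simp add: matrix_vector_mul_assoc matrix_mul_assoc)

lemma matrix_vector_mult_diagonalized_axis:
  fixes A L L' R :: "'a::comm_ring_1^'m::finite^'m"
  assumes "L' ** L = mat 1" and "diagonal_mat (L ** A ** R)"
  shows "A *v (R *v axis i 1) = (L ** A ** R) $ i $ i *s (L' *v axis i 1)"
proof -
  have "(L ** A ** R) *v axis i 1 = (L ** A ** R) $ i $ i *s axis i 1"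
    using diagonal_matrix_vector_mult[OF assms(2)] by (simp add: vec_eq_iff axis_def)
  then show ?thesis
    by (simp add: matrix_vector_mult_diagonalized[OF assms(1)] matrix_vector_mult_scalar)
qed

lemma dotp_gram_transpose:
  fixes G L' R :: "'a::comm_ring_1^'m::finite^'m"
  shows "dotp (R *v x) (G *v (L' *v y)) = dotp x ((transpose R ** G ** L') *v y)"
proof -
  have "dotp (R *v x) (G *v (L' *v y)) = dotp (x v* transpose R) (G *v (L' *v y))"
    by (simp only: vector_transpose_matrix)
  also have "\<dots> = dotp x (transpose R *v (G *v (L' *v y)))"
    by (rule dotp_matrix_vector_mult[symmetric])
  also have "\<dots> = dotp x ((transpose R ** G ** L') *v y)"
    by (simp only: matrix_vector_mul_assoc matrix_mul_assoc)
  finally show ?thesis .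
qed

locale skew_adjoint_mod_uniformizer =
  fixes \<pi> :: "'a::idom" and G A :: "'a^'m::finite^'m"
  assumes uniformizer: "is_dvr_uniformizer \<pi>"
    and gram_sym: "\<And>x y. dotp x (G *v y) = dotp y (G *v x)"
    and skew_adjoint: "\<And>x y. dotp (A *v x) (G *v y) = - dotp x (G *v (A *v y))"
    and gram_nondegenerate: "\<And>y. vec_dvd \<pi> (G *v y) \<Longrightarrow> vec_dvd \<pi> y"
begin

lemma vec_dvd_of_form_dvd:
  assumes "\<And>z. \<pi> dvd dotp y (G *v z)"
  shows "vec_dvd \<pi> y"
proof -
  have "(G *v y) $ a = dotp y (G *v axis a 1)" for a
    using gram_sym dotp_axis_left by metis
  then show ?thesis using assms gram_nondegenerate unfolding vec_dvd_def by metis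
qed

text \<open>The columns R e_i lying in the kernel modulo \<pi>^r pair trivially modulo \<pi> with the
  columns L' e_j spanning the image of A modulo \<pi>^r, by skew-adjointness.\<close>
lemma kernel_image_pairing_dvd:
  fixes L L' R :: "'a^'m^'m"
  assumes diag: "diagonal_mat (L ** A ** R)" and L': "L' ** L = mat 1"
    and i: "\<pi> ^ r dvd (L ** A ** R) $ i $ i" and j: "\<not> \<pi> ^ r dvd (L ** A ** R) $ j $ j"
  shows "\<pi> dvd dotp (R *v axis i 1) (G *v (L' *v axis j 1))"
proof -
  note AR = matrix_vector_mult_diagonalized_axis[OF L' diag]
  let ?D = "L ** A ** R"
  have "?D $ j $ j * dotp (R *v axis i 1) (G *v (L' *v axis j 1))
      = dotp (R *v axis i 1) (G *v (A *v (R *v axis j 1)))"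
    by (simp only: AR matrix_vector_mult_scalar dotp_scalar_mult_right)
  also have "\<dots> = - dotp (A *v (R *v axis i 1)) (G *v (R *v axis j 1))"
    by (simp add: skew_adjoint)
  also have "\<dots> = - (?D $ i $ i * dotp (L' *v axis i 1) (G *v (R *v axis j 1)))"
    by (simp only: AR dotp_scalar_mult_left)
  finally have "\<pi> ^ r dvd ?D $ j $ j * dotp (R *v axis i 1) (G *v (L' *v axis j 1))"
    using i by simp
  then show ?thesis by (rule uniformizer_dvd_of_power_dvd_mult[OF uniformizer j])
qed

text \<open>Otherwise the pairing H between the kernel columns and the image columns has a
  non-trivial kernel modulo \<pi> on its square block, and a left kernel vector of H yields a
  vector G-orthogonal to everything modulo \<pi>.\<close>
lemma kernel_orthogonal_coefficient_dvd:
  fixes L L' R R' :: "'a^'m^'m"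
  assumes diag: "diagonal_mat (L ** A ** R)" and L': "L' ** L = mat 1" and R': "R' ** R = mat 1"
    and orth: "\<And>Z. vec_dvd (\<pi> ^ r) (A *v Z) \<Longrightarrow> \<pi> dvd dotp T (G *v Z)"
    and k: "\<pi> ^ r dvd (L ** A ** R) $ k $ k"
  shows "\<pi> dvd (L *v T) $ k"
proof (rule ccontr)
  define D where "D = L ** A ** R"
  define u where "u = L *v T"
  define H where "H = transpose R ** G ** L'"
  note H = dotp_gram_transpose[of R _ G L', folded H_def]
  assume "\<not> \<pi> dvd (L *v T) $ k"
  then have uk: "\<not> \<pi> dvd u $ k" by (simp add: u_def)
  have T: "T = L' *v u" by (simp add: u_def matrix_vector_mul_assoc L')
  have row: "\<pi> dvd (H *v u) $ i" if "\<pi> ^ r dvd D $ i $ i" for i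
  proof -
    have "vec_dvd (\<pi> ^ r) (A *v (R *v axis i 1))"
      unfolding matrix_vector_mult_diagonalized_axis[OF L' diag]
      by (rule vec_dvd_scalar_mult[OF that[unfolded D_def]])
    then have "\<pi> dvd dotp T (G *v (R *v axis i 1))" by (rule orth)
    also have "dotp T (G *v (R *v axis i 1)) = dotp (R *v axis i 1) (G *v (L' *v u))"
      by (subst gram_sym) (simp only: T)
    also have "\<dots> = (H *v u) $ i" by (simp only: H dotp_axis_left)
    finally show ?thesis .
  qed
  have block: "\<pi> dvd H $ i $ j" if "\<pi> ^ r dvd D $ i $ i" "\<not> \<pi> ^ r dvd D $ j $ j" for i j
  proof -
    have "H $ i $ j = dotp (R *v axis i 1) (G *v (L' *v axis j 1))"
      by (simp only: H dotp_axis_left matrix_vector_mult_axis)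
    then show ?thesis using kernel_image_pairing_dvd[OF diag L'] that unfolding D_def by simp
  qed
  obtain x where x: "\<not> vec_dvd \<pi> x" "vec_dvd \<pi> (x v* H)"
    using block_left_kernel_mod_uniformizer[OF uniformizer, of "{i. \<not> \<pi> ^ r dvd D $ i $ i}" H u k]
      row block k uk unfolding D_def by auto
  have "\<pi> dvd dotp (R *v x) (G *v z)" for z
  proof -
    have "dotp (R *v x) (G *v z) = dotp (R *v x) (G *v (L' *v (L *v z)))"
      by (simp add: matrix_vector_mul_assoc L')
    also have "\<dots> = dotp (x v* H) (L *v z)" unfolding H by (rule dotp_matrix_vector_mult)
    finally show ?thesis using dotp_dvd_left[OF x(2)] by simp
  qed
  then have "vec_dvd \<pi> (R' *v (R *v x))" by (intro vec_dvd_matrix_vector_mult vec_dvd_of_form_dvd)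
  then show False using x(1) by (simp add: matrix_vector_mul_assoc R')
qed

lemma kernel_orthogonal_in_image:
  assumes r: "r \<ge> 1" and orth: "\<And>Z. vec_dvd (\<pi> ^ r) (A *v Z) \<Longrightarrow> \<pi> dvd dotp T (G *v Z)"
  shows "\<exists>W. vec_dvd (\<pi> ^ r) (A *v W - \<pi> ^ (r - 1) *s T)"
proof -
  obtain L R :: "'a^'m^'m" where LR: "invertible L" "invertible R" "diagonal_mat (L ** A ** R)"
    using diagonalization_dvd_total[OF uniformizer_dvd_total[OF uniformizer]] by blast
  obtain L' where L': "L' ** L = mat 1" using invertibleE[OF LR(1)] by metis
  obtain R' where R': "R' ** R = mat 1" using invertibleE[OF LR(2)] by metis
  define D where "D = L ** A ** R"
  define S where "S = {i. \<not> \<pi> ^ r dvd D $ i $ i}"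
  define u where "u = L *v T"
  have "\<forall>i\<in>S. \<exists>e. \<pi> ^ (r - 1) = D $ i $ i * e"
    using dvd_power_pred_of_not_power_dvd[OF uniformizer] unfolding S_def dvd_def by blast
  then obtain e where e: "\<And>i. i \<in> S \<Longrightarrow> \<pi> ^ (r - 1) = D $ i $ i * e i" by metis
  define v where "v = (\<chi> i. if i \<in> S then \<pi> ^ (r - 1) * u $ i else 0)"
  have "D *v (\<chi> i. if i \<in> S then e i * u $ i else 0) = v"
    using diagonal_matrix_vector_mult[OF LR(3)] e by (auto simp: vec_eq_iff v_def D_def mult_ac)
  then have "A *v (R *v (\<chi> i. if i \<in> S then e i * u $ i else 0)) = L' *v v"
    using matrix_vector_mult_diagonalized[OF L'] unfolding D_def by metis
  moreover have "T = L' *v u" by (simp add: u_def matrix_vector_mul_assoc L')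
  ultimately have eq: "A *v (R *v (\<chi> i. if i \<in> S then e i * u $ i else 0)) - \<pi> ^ (r - 1) *s T
      = L' *v (v - \<pi> ^ (r - 1) *s u)"
    by (simp add: matrix_vector_mult_diff_distrib matrix_vector_mult_scalar)
  have "vec_dvd (\<pi> ^ r) (v - \<pi> ^ (r - 1) *s u)"
    unfolding vec_dvd_def
  proof
    fix i
    show "\<pi> ^ r dvd (v - \<pi> ^ (r - 1) *s u) $ i"
    proof (cases "i \<in> S")
      case False
      then have "\<pi> dvd u $ i"
        using kernel_orthogonal_coefficient_dvd[OF LR(3) L' R' orth] by (simp add: S_def D_def u_def)
      then obtain c where "u $ i = \<pi> * c" ..
      then have "\<pi> ^ (r - 1) * u $ i = \<pi> ^ r * c" using r by (cases r) (simp_all add: mult_ac)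
      then show ?thesis using False by (simp add: v_def)
    qed (simp add: v_def)
  qed
  then have "vec_dvd (\<pi> ^ r) (A *v (R *v (\<chi> i. if i \<in> S then e i * u $ i else 0)) - \<pi> ^ (r - 1) *s T)"
    unfolding eq by (rule vec_dvd_matrix_vector_mult)
  then show ?thesis by blast
qed

end

section \<open>Trace-zero matrices and the invariant form\<close>

definition mat_dvd :: "'a::comm_ring_1 \<Rightarrow> 'a^'n^'n \<Rightarrow> bool" where
  "mat_dvd m X \<longleftrightarrow> (\<forall>i j. m dvd X $ i $ j)"

lemma mat_cong_iff_mat_dvd: "mat_cong \<pi> k X Y \<longleftrightarrow> mat_dvd (\<pi> ^ k) (X - Y)"
  unfolding mat_cong_def mat_dvd_def by simp

lemma mem_shadow_iff:
  "Z \<in> shadow \<pi> k A \<longleftrightarrow> Z \<in> sl \<and> (\<exists>Y\<in>sl. mat_dvd (\<pi> ^ k) (bracket Y A) \<and> mat_dvd \<pi> (Z - Y))"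
  unfolding shadow_def mat_cong_iff_mat_dvd by simp

lemma smat_entry [simp]: "smat c X $ i $ j = c * X $ i $ j"
  by (simp add: smat_def)

lemma mat_dvd_add: "mat_dvd m X \<Longrightarrow> mat_dvd m Y \<Longrightarrow> mat_dvd m (X + Y)"
  unfolding mat_dvd_def by simp

lemma mat_dvd_diff: "mat_dvd m X \<Longrightarrow> mat_dvd m Y \<Longrightarrow> mat_dvd m (X - Y)"
  unfolding mat_dvd_def by simp

lemma mat_dvd_uminus: "mat_dvd m X \<Longrightarrow> mat_dvd m (- X)"
  unfolding mat_dvd_def by simp

lemma mat_dvd_smat: "m dvd c \<Longrightarrow> mat_dvd m (smat c X)"
  unfolding mat_dvd_def by simp

lemma mat_dvd_trans: "m dvd m' \<Longrightarrow> mat_dvd m' X \<Longrightarrow> mat_dvd m X"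
  unfolding mat_dvd_def by (meson dvd_trans)

lemma mat_dvd_mult_left: "mat_dvd m X \<Longrightarrow> mat_dvd m ((X::'a::comm_ring_1^'n^'n) ** Y)"
  unfolding mat_dvd_def by (auto simp: matrix_mult_entry intro!: dvd_sum dvd_mult2)

lemma mat_dvd_mult_right: "mat_dvd m Y \<Longrightarrow> mat_dvd m ((X::'a::comm_ring_1^'n^'n) ** Y)"
  unfolding mat_dvd_def by (auto simp: matrix_mult_entry intro!: dvd_sum dvd_mult)

lemma mat_dvd_bracket_left: "mat_dvd m X \<Longrightarrow> mat_dvd m (bracket X Y)"
  unfolding bracket_def by (intro mat_dvd_diff mat_dvd_mult_left mat_dvd_mult_right)

lemma mat_dvd_bracket_right: "mat_dvd m Y \<Longrightarrow> mat_dvd m (bracket X Y)"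
  unfolding bracket_def by (intro mat_dvd_diff mat_dvd_mult_left mat_dvd_mult_right)

lemma smat_mult_left: "smat c X ** Y = smat c ((X::'a::comm_ring_1^'n^'n) ** Y)"
  by (simp add: vec_eq_iff matrix_mult_entry sum_distrib_left mult_ac)

lemma smat_mult_right: "X ** smat c Y = smat c ((X::'a::comm_ring_1^'n^'n) ** Y)"
  by (simp add: vec_eq_iff matrix_mult_entry sum_distrib_left mult_ac)

lemma smat_diff: "smat c X - smat c Y = smat c ((X::'a::comm_ring_1^'n^'n) - Y)"
  by (simp add: vec_eq_iff right_diff_distrib)

lemma bracket_add_left: "bracket (X + Y) Z = bracket X Z + bracket (Y::'a::comm_ring_1^'n^'n) Z"
  unfolding bracket_def by (simp add: matrix_add_rdistrib matrix_add_ldistrib)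

lemma bracket_add_right: "bracket X (Y + Z) = bracket X Y + bracket X (Z::'a::comm_ring_1^'n^'n)"
  unfolding bracket_def by (simp add: matrix_add_rdistrib matrix_add_ldistrib)

lemma bracket_diff_left: "bracket (X - Y) Z = bracket X Z - bracket (Y::'a::comm_ring_1^'n^'n) Z"
  unfolding bracket_def by (simp add: matrix_diff_rdistrib matrix_diff_ldistrib)

lemma bracket_diff_right: "bracket X (Y - Z) = bracket X Y - bracket X (Z::'a::comm_ring_1^'n^'n)"
  unfolding bracket_def by (simp add: matrix_diff_rdistrib matrix_diff_ldistrib)

lemma bracket_smat_left: "bracket (smat c X) Y = smat c (bracket X (Y::'a::comm_ring_1^'n^'n))"
  unfolding bracket_def by (simp add: smat_mult_left smat_mult_right smat_diff)

lemma bracket_smat_right: "bracket X (smat c Y) = smat c (bracket X (Y::'a::comm_ring_1^'n^'n))"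
  unfolding bracket_def by (simp add: smat_mult_left smat_mult_right smat_diff)

lemma bracket_antisym: "bracket X Y = - bracket Y (X::'a::comm_ring_1^'n^'n)"
  unfolding bracket_def by simp

lemma sl_add: "X \<in> sl \<Longrightarrow> Y \<in> sl \<Longrightarrow> (X::'a::comm_ring_1^'n^'n) + Y \<in> sl"
  by (simp add: sl_def trace_add)

lemma sl_diff: "X \<in> sl \<Longrightarrow> Y \<in> sl \<Longrightarrow> (X::'a::comm_ring_1^'n^'n) - Y \<in> sl"
  by (simp add: sl_def trace_sub)

lemma trace_smat: "trace (smat c X) = c * trace (X::'a::comm_ring_1^'n^'n)"
  by (simp add: trace_def sum_distrib_left)

lemma sl_smat: "X \<in> sl \<Longrightarrow> smat c (X::'a::comm_ring_1^'n^'n) \<in> sl"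
  by (simp add: sl_def trace_smat)

lemma sl_zero: "(0::'a::comm_ring_1^'n^'n) \<in> sl"
  by (simp add: sl_def trace_def)

lemma sl_bracket: "bracket X (Y::'a::comm_ring_1^'n^'n) \<in> sl"
  unfolding sl_def bracket_def using trace_mul_sym[of X Y] by (simp add: trace_sub)

lemma sl_mat_dvd_obtain:
  fixes X :: "'a::idom^'n^'n"
  assumes "m \<noteq> 0" "X \<in> sl" "mat_dvd m X"
  obtains M where "M \<in> sl" "X = smat m M"
proof -
  have "\<forall>i j. \<exists>c. X $ i $ j = m * c" using assms(3) unfolding mat_dvd_def dvd_def by blast
  then obtain c where c: "\<And>i j. X $ i $ j = m * c i j" by metis
  define M where "M = (\<chi> i j. c i j)"
  have XM: "X = smat m M" by (simp add: vec_eq_iff M_def c)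
  then have "m * trace M = 0" using assms(2) by (simp add: sl_def trace_smat)
  then have "M \<in> sl" using assms(1) by (simp add: sl_def)
  then show ?thesis using that XM by blast
qed

context
  fixes \<pi> :: "'a::idom" and \<kappa> :: "'a^'n::finite^'n \<Rightarrow> 'a^'n^'n \<Rightarrow> 'a"
  assumes good: "good_form \<pi> \<kappa>"
begin

lemma form_add_left: "X \<in> sl \<Longrightarrow> Y \<in> sl \<Longrightarrow> Z \<in> sl \<Longrightarrow> \<kappa> (X + Y) Z = \<kappa> X Z + \<kappa> Y Z"
  using good unfolding good_form_def by blast

lemma form_smat_left: "X \<in> sl \<Longrightarrow> Z \<in> sl \<Longrightarrow> \<kappa> (smat a X) Z = a * \<kappa> X Z"
  using good unfolding good_form_def by blast

lemma form_sym: "X \<in> sl \<Longrightarrow> Y \<in> sl \<Longrightarrow> \<kappa> X Y = \<kappa> Y X"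
  using good unfolding good_form_def by blast

lemma form_invariant: "X \<in> sl \<Longrightarrow> Y \<in> sl \<Longrightarrow> Z \<in> sl \<Longrightarrow> \<kappa> (bracket X Y) Z = \<kappa> X (bracket Y Z)"
  using good unfolding good_form_def by blast

lemma form_nondegenerate: "X \<in> sl \<Longrightarrow> (\<And>Y. Y \<in> sl \<Longrightarrow> \<pi> dvd \<kappa> X Y) \<Longrightarrow> mat_dvd \<pi> X"
  using good unfolding good_form_def mat_cong_iff_mat_dvd by auto

lemma form_add_right: "X \<in> sl \<Longrightarrow> Y \<in> sl \<Longrightarrow> Z \<in> sl \<Longrightarrow> \<kappa> Z (X + Y) = \<kappa> Z X + \<kappa> Z Y"
  by (simp add: form_sym[of Z] form_add_left sl_add)

lemma form_smat_right: "X \<in> sl \<Longrightarrow> Z \<in> sl \<Longrightarrow> \<kappa> Z (smat a X) = a * \<kappa> Z X"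
  by (simp add: form_sym[of Z] form_smat_left sl_smat)

lemma form_zero_left: "Z \<in> sl \<Longrightarrow> \<kappa> 0 Z = 0"
  using form_smat_left[OF sl_zero, of Z 0] by (simp add: smat_def vec_eq_iff zero_vec_def)

lemma form_diff_left: "X \<in> sl \<Longrightarrow> Y \<in> sl \<Longrightarrow> Z \<in> sl \<Longrightarrow> \<kappa> (X - Y) Z = \<kappa> X Z - \<kappa> Y Z"
  using form_add_left[of "X - Y" Y Z] by (simp add: sl_diff)

lemma form_diff_right: "X \<in> sl \<Longrightarrow> Y \<in> sl \<Longrightarrow> Z \<in> sl \<Longrightarrow> \<kappa> Z (X - Y) = \<kappa> Z X - \<kappa> Z Y"
  by (simp add: form_sym[of Z] form_diff_left sl_diff)

lemma form_uminus_right: "X \<in> sl \<Longrightarrow> Z \<in> sl \<Longrightarrow> \<kappa> Z (- X) = - \<kappa> Z X"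
  using form_diff_right[OF sl_zero, of X Z] form_sym[OF _ sl_zero] form_zero_left by simp

lemma form_dvd_left: "m \<noteq> 0 \<Longrightarrow> X \<in> sl \<Longrightarrow> Z \<in> sl \<Longrightarrow> mat_dvd m X \<Longrightarrow> m dvd \<kappa> X Z"
  by (metis sl_mat_dvd_obtain form_smat_left dvd_triv_left)

lemma form_dvd_right: "m \<noteq> 0 \<Longrightarrow> X \<in> sl \<Longrightarrow> Z \<in> sl \<Longrightarrow> mat_dvd m X \<Longrightarrow> m dvd \<kappa> Z X"
  using form_dvd_left form_sym by metis

end

section \<open>Coordinates on sl_n\<close>

text \<open>sl_n is a free module: the entry at the fixed diagonal position (undefined, undefined)
  is determined by the others through the trace. sl_coords records all other entries and puts 0
  at that position, so sl_of_coords is a left inverse of sl_coords on sl and ignores the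
  coordinate at (undefined, undefined).\<close>
definition sl_coords :: "'a::comm_ring_1^'n::finite^'n \<Rightarrow> 'a^('n \<times> 'n)" where
  "sl_coords X = (\<chi> p. if p = (undefined, undefined) then 0 else X $ fst p $ snd p)"

definition sl_of_coords :: "'a::comm_ring_1^('n::finite \<times> 'n) \<Rightarrow> 'a^'n^'n" where
  "sl_of_coords v = (\<chi> i j. if i = undefined \<and> j = undefined
     then - (\<Sum>k\<in>UNIV - {undefined}. v $ (k, k)) else v $ (i, j))"

lemma sl_coords_entry: "sl_coords X $ (i, j) = (if i = undefined \<and> j = undefined then 0 else X $ i $ j)"
  unfolding sl_coords_def by auto

lemma sl_of_coords_entry:
  "sl_of_coords v $ i $ j = (if i = undefined \<and> j = undefined
     then - (\<Sum>k\<in>UNIV - {undefined}. v $ (k, k)) else v $ (i, j))"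
  unfolding sl_of_coords_def by simp

lemma trace_split_undefined:
  "trace (X::'a::comm_ring_1^'n::finite^'n) = X $ undefined $ undefined + (\<Sum>k\<in>UNIV - {undefined}. X $ k $ k)"
  unfolding trace_def by (simp add: sum.remove[of UNIV undefined])

lemma sl_of_coords_in_sl: "sl_of_coords v \<in> sl"
proof -
  have "(\<Sum>k\<in>UNIV - {undefined}. sl_of_coords v $ k $ k) = (\<Sum>k\<in>UNIV - {undefined}. v $ (k, k))"
    by (intro sum.cong) (auto simp: sl_of_coords_entry)
  then show ?thesis unfolding sl_def trace_split_undefined by (simp add: sl_of_coords_entry)
qed

lemma sl_of_coords_sl_coords: "X \<in> sl \<Longrightarrow> sl_of_coords (sl_coords X) = X"
proof -
  assume "X \<in> sl"
  then have "X $ undefined $ undefined = - (\<Sum>k\<in>UNIV - {undefined}. X $ k $ k)"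
    unfolding sl_def trace_split_undefined by (simp add: eq_neg_iff_add_eq_0)
  moreover have "(\<Sum>k\<in>UNIV - {undefined}. sl_coords X $ (k, k)) = (\<Sum>k\<in>UNIV - {undefined}. X $ k $ k)"
    by (intro sum.cong) (auto simp: sl_coords_entry)
  ultimately show ?thesis by (auto simp: vec_eq_iff sl_of_coords_entry sl_coords_entry)
qed

lemma sl_coords_undefined [simp]: "sl_coords X $ (undefined, undefined) = 0"
  by (simp add: sl_coords_entry)

lemma sl_coords_add: "sl_coords (X + Y) = sl_coords X + sl_coords Y"
  by (simp add: vec_eq_iff sl_coords_def)

lemma sl_coords_diff: "sl_coords (X - Y) = sl_coords X - sl_coords Y"
  by (simp add: vec_eq_iff sl_coords_def)

lemma sl_coords_smat: "sl_coords (smat c X) = c *s sl_coords X"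
  by (simp add: vec_eq_iff sl_coords_def)

lemma sl_of_coords_add: "sl_of_coords (v + w) = sl_of_coords v + sl_of_coords w"
  by (simp add: vec_eq_iff sl_of_coords_entry sum.distrib)

lemma sl_of_coords_scalar_mult: "sl_of_coords (c *s v) = smat c (sl_of_coords v)"
  by (simp add: vec_eq_iff sl_of_coords_entry sum_distrib_left)

lemma sl_of_coords_axis_undefined:
  "sl_of_coords (axis (undefined, undefined) 1) = (0::'a::comm_ring_1^'n::finite^'n)"
proof -
  have "(\<Sum>k\<in>UNIV - {undefined::'n}. (axis (undefined, undefined) 1 :: 'a^('n \<times> 'n)) $ (k, k)) = 0"
    by (intro sum.neutral) (auto simp: axis_def)
  then show ?thesis by (auto simp: vec_eq_iff sl_of_coords_entry axis_def)
qed

lemma mat_dvd_sl_of_coords: "vec_dvd m v \<Longrightarrow> mat_dvd m (sl_of_coords v)"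
  unfolding vec_dvd_def mat_dvd_def by (auto simp: sl_of_coords_entry intro!: dvd_sum)

definition gram_matrix :: "('a::comm_ring_1^'m \<Rightarrow> 'a^'m \<Rightarrow> 'a) \<Rightarrow> 'a^'m^'m" where
  "gram_matrix f = (\<chi> a b. f (axis a 1) (axis b 1))"

definition lin_matrix :: "('a::comm_ring_1^'m \<Rightarrow> 'a^'m) \<Rightarrow> 'a^'m^'m" where
  "lin_matrix F = (\<chi> i j. F (axis j 1) $ i)"

lemma bilinear_eq_dotp_gram_matrix:
  fixes f :: "'a::comm_ring_1^'m::finite \<Rightarrow> 'a^'m \<Rightarrow> 'a"
  assumes add_left: "\<And>x x' y. f (x + x') y = f x y + f x' y"
    and scalar_left: "\<And>c x y. f (c *s x) y = c * f x y"
    and add_right: "\<And>x y y'. f x (y + y') = f x y + f x y'"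
    and scalar_right: "\<And>c x y. f x (c *s y) = c * f x y"
  shows "f x y = dotp x (gram_matrix f *v y)"
proof -
  have zero_left: "f 0 y = 0" for y using scalar_left[of 0 0 y] by simp
  have zero_right: "f x 0 = 0" for x using scalar_right[of x 0 0] by simp
  have sum_left: "f (\<Sum>a\<in>A. g a) y = (\<Sum>a\<in>A. f (g a) y)" if "finite A" for A :: "'b set" and g y
    using that by induct (simp_all add: zero_left add_left)
  have sum_right: "f x (\<Sum>a\<in>A. g a) = (\<Sum>a\<in>A. f x (g a))" if "finite A" for A :: "'b set" and g x
    using that by induct (simp_all add: zero_right add_right)
  have "f x y = f (\<Sum>a\<in>UNIV. x $ a *s axis a 1) (\<Sum>b\<in>UNIV. y $ b *s axis b 1)"
    by (simp add: basis_expansion)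
  also have "\<dots> = (\<Sum>b\<in>UNIV. \<Sum>a\<in>UNIV. x $ a * (f (axis a 1) (axis b 1) * y $ b))"
    by (simp add: sum_left sum_right scalar_left scalar_right sum_distrib_left mult_ac)
  also have "\<dots> = (\<Sum>a\<in>UNIV. \<Sum>b\<in>UNIV. x $ a * (f (axis a 1) (axis b 1) * y $ b))"
    by (rule sum.swap)
  also have "\<dots> = dotp x (gram_matrix f *v y)"
    by (simp add: dotp_def matrix_vector_mult_entry gram_matrix_def sum_distrib_left)
  finally show ?thesis .
qed

lemma linear_eq_lin_matrix:
  fixes F :: "'a::comm_ring_1^'m::finite \<Rightarrow> 'a^'m"
  assumes add: "\<And>x y. F (x + y) = F x + F y"
    and scalar: "\<And>c x. F (c *s x) = c *s F x"
  shows "F y = lin_matrix F *v y"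
proof -
  have zero: "F 0 = 0" using scalar[of 0 0] by simp
  have sum: "F (\<Sum>a\<in>A. g a) = (\<Sum>a\<in>A. F (g a))" if "finite A" for A :: "'b set" and g
    using that by induct (simp_all add: zero add)
  have "F y = F (\<Sum>j\<in>UNIV. y $ j *s axis j 1)" by (simp add: basis_expansion)
  also have "\<dots> = (\<Sum>j\<in>UNIV. y $ j *s F (axis j 1))" by (simp add: sum scalar)
  also have "\<dots> = lin_matrix F *v y"
    by (simp add: vec_eq_iff matrix_vector_mult_entry lin_matrix_def mult.commute)
  finally show ?thesis .
qed

text \<open>The extra product of the (undefined, undefined) coordinates keeps the form non-degenerate
  on the whole coordinate module, although sl_of_coords ignores that coordinate.\<close>
definition coords_form :: "('a::comm_ring_1^'n::finite^'n \<Rightarrow> 'a^'n^'n \<Rightarrow> 'a)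
    \<Rightarrow> 'a^('n \<times> 'n) \<Rightarrow> 'a^('n \<times> 'n) \<Rightarrow> 'a" where
  "coords_form \<kappa> v w = \<kappa> (sl_of_coords v) (sl_of_coords w)
     + v $ (undefined, undefined) * w $ (undefined, undefined)"

definition ad_coords :: "'a::comm_ring_1^'n::finite^'n \<Rightarrow> 'a^('n \<times> 'n) \<Rightarrow> 'a^('n \<times> 'n)" where
  "ad_coords B v = sl_coords (bracket (sl_of_coords v) B)"

lemma coords_form_eq_dotp:
  fixes \<pi> :: "'a::idom" and \<kappa> :: "'a^'n::finite^'n \<Rightarrow> 'a^'n^'n \<Rightarrow> 'a"
  assumes good: "good_form \<pi> \<kappa>"
  shows "coords_form \<kappa> x y = dotp x (gram_matrix (coords_form \<kappa>) *v y)"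
  by (rule bilinear_eq_dotp_gram_matrix)
    (simp_all add: coords_form_def sl_of_coords_add sl_of_coords_scalar_mult sl_of_coords_in_sl
      form_add_left[OF good] form_add_right[OF good] form_smat_left[OF good]
      form_smat_right[OF good] algebra_simps)

lemma ad_coords_eq_lin_matrix: "lin_matrix (ad_coords B) *v y = ad_coords B y"
  by (rule linear_eq_lin_matrix[symmetric])
    (simp_all add: ad_coords_def sl_of_coords_add sl_of_coords_scalar_mult bracket_add_left
      bracket_smat_left sl_coords_add sl_coords_smat)

lemma coords_form_nondegenerate:
  fixes \<pi> :: "'a::idom" and \<kappa> :: "'a^'n::finite^'n \<Rightarrow> 'a^'n^'n \<Rightarrow> 'a"
  assumes good: "good_form \<pi> \<kappa>" and dvd: "\<And>x. \<pi> dvd coords_form \<kappa> x y"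
  shows "vec_dvd \<pi> y"
proof -
  have "\<pi> dvd \<kappa> (sl_of_coords y) X" if X: "X \<in> sl" for X
  proof -
    have "\<kappa> X (sl_of_coords y) = coords_form \<kappa> (sl_coords X) y"
      using X by (simp add: coords_form_def sl_of_coords_sl_coords)
    then show ?thesis using dvd[of "sl_coords X"] form_sym[OF good X sl_of_coords_in_sl] by simp
  qed
  then have "mat_dvd \<pi> (sl_of_coords y)"
    by (rule form_nondegenerate[OF good sl_of_coords_in_sl])
  moreover have "\<pi> dvd y $ (undefined, undefined)"
    using dvd[of "axis (undefined, undefined) 1"]
    by (simp add: coords_form_def sl_of_coords_axis_undefined form_zero_left[OF good sl_of_coords_in_sl])
  ultimately show ?thesis
    unfolding vec_dvd_def mat_dvd_def by (auto simp: sl_of_coords_entry split: if_splits)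
qed

lemma skew_adjoint_mod_uniformizer_coords:
  fixes \<pi> :: "'a::idom" and \<kappa> :: "'a^'n::finite^'n \<Rightarrow> 'a^'n^'n \<Rightarrow> 'a"
  assumes dvr: "is_dvr_uniformizer \<pi>" and good: "good_form \<pi> \<kappa>" and B: "B \<in> sl"
  shows "skew_adjoint_mod_uniformizer \<pi> (gram_matrix (coords_form \<kappa>)) (lin_matrix (ad_coords B))"
proof -
  let ?G = "gram_matrix (coords_form \<kappa>)" and ?A = "lin_matrix (ad_coords B)"
  note G = coords_form_eq_dotp[OF good] and A = ad_coords_eq_lin_matrix
  have ad: "sl_of_coords (ad_coords B v) = bracket (sl_of_coords v) B" for v
    by (simp add: ad_coords_def sl_of_coords_sl_coords sl_bracket)
  have ad_undefined: "ad_coords B v $ (undefined, undefined) = 0" for v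
    by (simp add: ad_coords_def)
  show ?thesis
  proof
    show "is_dvr_uniformizer \<pi>" by (rule dvr)
    show "dotp x (?G *v y) = dotp y (?G *v x)" for x y
      unfolding G[symmetric] coords_form_def
      using form_sym[OF good sl_of_coords_in_sl sl_of_coords_in_sl] by (simp add: mult.commute)
    show "dotp (?A *v x) (?G *v y) = - dotp x (?G *v (?A *v y))" for x y
    proof -
      let ?x = "sl_of_coords x" and ?y = "sl_of_coords y"
      have "dotp (?A *v x) (?G *v y) = \<kappa> (bracket ?x B) ?y"
        by (simp add: G[symmetric] coords_form_def A ad ad_undefined)
      also have "\<dots> = \<kappa> ?x (bracket B ?y)"
        by (rule form_invariant[OF good sl_of_coords_in_sl B sl_of_coords_in_sl])
      also have "\<dots> = - \<kappa> ?x (bracket ?y B)"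
        by (simp add: bracket_antisym[of B] form_uminus_right[OF good sl_bracket sl_of_coords_in_sl])
      also have "\<kappa> ?x (bracket ?y B) = dotp x (?G *v (?A *v y))"
        by (simp add: G[symmetric] coords_form_def A ad ad_undefined)
      finally show ?thesis .
    qed
    show "vec_dvd \<pi> y" if Gy: "vec_dvd \<pi> (?G *v y)" for y
    proof (rule coords_form_nondegenerate[OF good])
      fix x
      have "\<pi> dvd dotp (?G *v y) x" by (rule dotp_dvd_left[OF Gy])
      then show "\<pi> dvd coords_form \<kappa> x y" by (simp only: G dotp_commute[of x])
    qed
  qed
qed

lemma bracket_image_mod_power:
  fixes \<pi> :: "'a::idom" and \<kappa> :: "'a^'n::finite^'n \<Rightarrow> 'a^'n^'n \<Rightarrow> 'a"
  assumes dvr: "is_dvr_uniformizer \<pi>" and good: "good_form \<pi> \<kappa>" and r: "r \<ge> 1"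
    and B: "B \<in> sl" and T: "T \<in> sl"
    and orth: "\<And>Z. Z \<in> sl \<Longrightarrow> mat_dvd (\<pi> ^ r) (bracket B Z) \<Longrightarrow> \<pi> dvd \<kappa> T Z"
  shows "\<exists>W\<in>sl. mat_dvd (\<pi> ^ r) (bracket W B - smat (\<pi> ^ (r - 1)) T)"
proof -
  let ?G = "gram_matrix (coords_form \<kappa>)" and ?A = "lin_matrix (ad_coords B)"
  interpret skew_adjoint_mod_uniformizer \<pi> ?G ?A
    by (rule skew_adjoint_mod_uniformizer_coords[OF dvr good B])
  have "\<pi> dvd dotp (sl_coords T) (?G *v Z)" if AZ: "vec_dvd (\<pi> ^ r) (?A *v Z)" for Z
  proof -
    let ?Z = "sl_of_coords Z"
    have "mat_dvd (\<pi> ^ r) (sl_of_coords (sl_coords (bracket ?Z B)))"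
      using mat_dvd_sl_of_coords[OF AZ] by (simp add: ad_coords_eq_lin_matrix ad_coords_def)
    then have "mat_dvd (\<pi> ^ r) (bracket B ?Z)"
      by (simp add: sl_of_coords_sl_coords sl_bracket bracket_antisym[of B] mat_dvd_uminus)
    then have "\<pi> dvd \<kappa> T ?Z" by (rule orth[OF sl_of_coords_in_sl])
    moreover have "dotp (sl_coords T) (?G *v Z) = \<kappa> T ?Z"
      by (simp add: coords_form_eq_dotp[OF good, symmetric] coords_form_def sl_of_coords_sl_coords T)
    ultimately show ?thesis by simp
  qed
  then obtain W where W: "vec_dvd (\<pi> ^ r) (?A *v W - \<pi> ^ (r - 1) *s sl_coords T)"
    using kernel_orthogonal_in_image[OF r] by blast
  let ?R = "bracket (sl_of_coords W) B - smat (\<pi> ^ (r - 1)) T"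
  have "?A *v W - \<pi> ^ (r - 1) *s sl_coords T = sl_coords ?R"
    by (simp add: ad_coords_eq_lin_matrix ad_coords_def sl_coords_diff sl_coords_smat)
  then have "mat_dvd (\<pi> ^ r) (sl_of_coords (sl_coords ?R))"
    using mat_dvd_sl_of_coords[OF W] by simp
  then have "mat_dvd (\<pi> ^ r) ?R"
    by (simp add: sl_of_coords_sl_coords sl_diff sl_bracket sl_smat T)
  then show ?thesis using sl_of_coords_in_sl by blast
qed

section \<open>Shadows\<close>

lemma shadow_eq_of_mat_cong:
  assumes "mat_cong \<pi> k B E"
  shows "shadow \<pi> k E = shadow \<pi> k B"
proof -
  have "mat_dvd (\<pi> ^ k) (bracket Y B - bracket Y E)" for Y
    using assms unfolding mat_cong_iff_mat_dvd bracket_diff_right[symmetric]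
    by (rule mat_dvd_bracket_right)
  then have "mat_dvd (\<pi> ^ k) (bracket Y B) \<longleftrightarrow> mat_dvd (\<pi> ^ k) (bracket Y E)" for Y
    using mat_dvd_diff[of "\<pi> ^ k" "bracket Y B" "bracket Y B - bracket Y E"]
      mat_dvd_add[of "\<pi> ^ k" "bracket Y E" "bracket Y B - bracket Y E"] by auto
  then show ?thesis by (simp add: set_eq_iff mem_shadow_iff)
qed

lemma shadow_subset_of_lift:
  assumes "Y \<in> shadow \<pi> (r + 1) (B + smat (\<pi> ^ r) X)"
  shows "Y \<in> shadow \<pi> r B"
proof -
  obtain Y' where Y: "Y \<in> sl" "Y' \<in> sl" "mat_dvd (\<pi> ^ (r + 1)) (bracket Y' (B + smat (\<pi> ^ r) X))"
    "mat_dvd \<pi> (Y - Y')"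
    using assms unfolding mem_shadow_iff by blast
  have "bracket Y' B = bracket Y' (B + smat (\<pi> ^ r) X) - smat (\<pi> ^ r) (bracket Y' X)"
    by (simp add: bracket_add_right bracket_smat_right)
  moreover have "mat_dvd (\<pi> ^ r) (bracket Y' (B + smat (\<pi> ^ r) X))"
    by (rule mat_dvd_trans[OF _ Y(3)]) (simp add: le_imp_power_dvd)
  ultimately have "mat_dvd (\<pi> ^ r) (bracket Y' B)" by (simp add: mat_dvd_diff mat_dvd_smat)
  then show ?thesis unfolding mem_shadow_iff using Y by blast
qed

text \<open>With x = B + \<pi>^r X, invariance gives
  \<pi>^r \<kappa>(X, [Y', Z']) = \<kappa>(Y', [B, Z']) - \<kappa>([Y', x], Z'),
  and both terms on the right are divisible by \<pi>^(r+1).\<close>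
lemma shadow_of_lift_stabilizes:
  fixes \<pi> :: "'a::idom" and \<kappa> :: "'a^'n::finite^'n \<Rightarrow> 'a^'n^'n \<Rightarrow> 'a"
  assumes pne: "\<pi> \<noteq> 0" and good: "good_form \<pi> \<kappa>" and B: "B \<in> sl" and X: "X \<in> sl"
    and Y: "Y \<in> shadow \<pi> (r + 1) (B + smat (\<pi> ^ r) X)" and Z: "Z \<in> shadow \<pi> (r + 1) B"
  shows "\<pi> dvd \<kappa> X (bracket Y Z)"
proof -
  let ?x = "B + smat (\<pi> ^ r) X"
  obtain Y' where Y': "Y \<in> sl" "Y' \<in> sl" "mat_dvd (\<pi> ^ (r + 1)) (bracket Y' ?x)" "mat_dvd \<pi> (Y - Y')"
    using Y unfolding mem_shadow_iff by blast
  obtain Z' where Z': "Z \<in> sl" "Z' \<in> sl" "mat_dvd (\<pi> ^ (r + 1)) (bracket Z' B)" "mat_dvd \<pi> (Z - Z')"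
    using Z unfolding mem_shadow_iff by blast
  have p0: "\<pi> ^ (r + 1) \<noteq> 0" using pne by simp
  have "\<pi> ^ r * \<kappa> X (bracket Y' Z') = \<kappa> (bracket (smat (\<pi> ^ r) X) Y') Z'"
    by (simp add: form_invariant[OF good sl_smat[OF X] Y'(2) Z'(2)] form_smat_left[OF good X sl_bracket])
  also have "bracket (smat (\<pi> ^ r) X) Y' = bracket Y' B - bracket Y' ?x"
    by (simp add: bracket_add_right bracket_antisym[of _ Y'])
  also have "\<kappa> (bracket Y' B - bracket Y' ?x) Z' = \<kappa> Y' (bracket B Z') - \<kappa> (bracket Y' ?x) Z'"
    by (simp add: form_diff_left[OF good sl_bracket sl_bracket Z'(2)] form_invariant[OF good Y'(2) B Z'(2)])
  finally have eq: "\<pi> ^ r * \<kappa> X (bracket Y' Z') = \<kappa> Y' (bracket B Z') - \<kappa> (bracket Y' ?x) Z'" .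
  have "mat_dvd (\<pi> ^ (r + 1)) (bracket B Z')"
    using mat_dvd_uminus[OF Z'(3)] by (simp add: bracket_antisym[of B])
  then have "\<pi> ^ (r + 1) dvd \<kappa> Y' (bracket B Z')"
    by (rule form_dvd_right[OF good p0 sl_bracket Y'(2)])
  moreover have "\<pi> ^ (r + 1) dvd \<kappa> (bracket Y' ?x) Z'"
    by (rule form_dvd_left[OF good p0 sl_bracket Z'(2) Y'(3)])
  ultimately have "\<pi> ^ (r + 1) dvd \<pi> ^ r * \<kappa> X (bracket Y' Z')"
    unfolding eq by (rule dvd_diff)
  moreover have "\<pi> ^ (r + 1) = \<pi> ^ r * \<pi>" by simp
  ultimately have main: "\<pi> dvd \<kappa> X (bracket Y' Z')" using pne by (simp only: dvd_mult_cancel_left) simp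
  let ?D = "bracket (Y - Y') Z + bracket Y' (Z - Z')"
  have "bracket Y Z = bracket Y' Z' + ?D"
    by (simp add: bracket_diff_left bracket_diff_right)
  moreover have "\<pi> dvd \<kappa> X ?D"
    by (intro form_dvd_right[OF good pne] sl_add sl_bracket X mat_dvd_add mat_dvd_bracket_left
        mat_dvd_bracket_right Y'(4) Z'(4))
  ultimately show ?thesis
    using main by (simp add: form_add_right[OF good sl_bracket sl_add[OF sl_bracket sl_bracket] X])
qed

text \<open>Since \<pi>^r [Y, X] = - \<pi> \<pi>^(r-1) [X, Y], the correction \<pi> W cancels the error term of
  order \<pi>^r in the bracket of the lifts.\<close>
lemma bracket_lift_mat_dvd:
  assumes r: "r \<ge> 1" and YB: "mat_dvd (\<pi> ^ (r + 1)) (bracket Y B)"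
    and W: "mat_dvd (\<pi> ^ r) (bracket W B - smat (\<pi> ^ (r - 1)) (bracket X Y))"
  shows "mat_dvd (\<pi> ^ (r + 1)) (bracket (Y + smat \<pi> W) (B + smat (\<pi> ^ r) X))"
  unfolding mat_dvd_def
proof (intro allI)
  fix i j
  define R where "R = bracket W B - smat (\<pi> ^ (r - 1)) (bracket X Y)"
  have p: "\<pi> * \<pi> ^ (r - 1) = \<pi> ^ r" using r by (cases r) simp_all
  have "bracket (Y + smat \<pi> W) (B + smat (\<pi> ^ r) X) $ i $ j
      = bracket Y B $ i $ j + \<pi> * R $ i $ j + \<pi> * (\<pi> ^ r * bracket W X $ i $ j)"
    unfolding R_def
    by (simp add: bracket_add_left bracket_add_right bracket_smat_left bracket_smat_right
        bracket_antisym[of X] algebra_simps p[symmetric])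
  moreover have "\<pi> ^ (r + 1) dvd bracket Y B $ i $ j" using YB unfolding mat_dvd_def by blast
  moreover have "\<pi> ^ (r + 1) dvd \<pi> * R $ i $ j"
    using W unfolding mat_dvd_def R_def by (simp add: mult_dvd_mono)
  moreover have "\<pi> ^ (r + 1) dvd \<pi> * (\<pi> ^ r * bracket W X $ i $ j)"
    by (simp add: mult.assoc[symmetric])
  ultimately show "\<pi> ^ (r + 1) dvd bracket (Y + smat \<pi> W) (B + smat (\<pi> ^ r) X) $ i $ j"
    by (metis dvd_add)
qed

lemma stabilizer_subset_shadow_of_lift:
  fixes \<pi> :: "'a::idom" and \<kappa> :: "'a^'n::finite^'n \<Rightarrow> 'a^'n^'n \<Rightarrow> 'a"
  assumes dvr: "is_dvr_uniformizer \<pi>" and good: "good_form \<pi> \<kappa>" and r: "r \<ge> 1"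
    and B: "B \<in> sl" and X: "X \<in> sl" and stable: "shadow \<pi> (r + 1) B = shadow \<pi> r B"
    and Y: "Y \<in> shadow \<pi> r B" and stab: "\<And>Z. Z \<in> shadow \<pi> r B \<Longrightarrow> \<pi> dvd \<kappa> X (bracket Y Z)"
  shows "Y \<in> shadow \<pi> (r + 1) (B + smat (\<pi> ^ r) X)"
proof -
  have pne: "\<pi> \<noteq> 0" using dvr unfolding is_dvr_uniformizer_def by simp
  have "Y \<in> shadow \<pi> (r + 1) B" using Y stable by simp
  then obtain Y1 where Y1: "Y \<in> sl" "Y1 \<in> sl" "mat_dvd (\<pi> ^ (r + 1)) (bracket Y1 B)" "mat_dvd \<pi> (Y - Y1)"
    unfolding mem_shadow_iff by blast
  have "\<pi> dvd \<kappa> (bracket X Y1) Z" if Z: "Z \<in> sl" and BZ: "mat_dvd (\<pi> ^ r) (bracket B Z)" for Z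
  proof -
    have "mat_dvd (\<pi> ^ r) (bracket Z B)"
      using mat_dvd_uminus[OF BZ] by (simp add: bracket_antisym[of B])
    moreover have "mat_dvd \<pi> (Z - Z)" by (simp add: mat_dvd_def)
    ultimately have "Z \<in> shadow \<pi> r B" unfolding mem_shadow_iff using Z by blast
    then have "\<pi> dvd \<kappa> X (bracket Y Z)" by (rule stab)
    moreover have "\<pi> dvd \<kappa> X (bracket (Y - Y1) Z)"
      by (rule form_dvd_right[OF good pne sl_bracket X mat_dvd_bracket_left[OF Y1(4)]])
    moreover have "\<kappa> (bracket X Y1) Z = \<kappa> X (bracket Y Z) - \<kappa> X (bracket (Y - Y1) Z)"
      by (simp add: form_invariant[OF good X Y1(2) Z] bracket_diff_left
          form_diff_right[OF good sl_bracket sl_bracket X])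
    ultimately show ?thesis by simp
  qed
  then obtain W where W: "W \<in> sl" "mat_dvd (\<pi> ^ r) (bracket W B - smat (\<pi> ^ (r - 1)) (bracket X Y1))"
    using bracket_image_mod_power[OF dvr good r B sl_bracket] by blast
  have "mat_dvd \<pi> (Y - (Y1 + smat \<pi> W))"
    using mat_dvd_diff[OF Y1(4) mat_dvd_smat[OF dvd_refl, of \<pi> W]] by (simp add: algebra_simps)
  moreover have "Y1 + smat \<pi> W \<in> sl" by (intro sl_add Y1(2) sl_smat W(1))
  ultimately show ?thesis
    unfolding mem_shadow_iff using Y1(1) bracket_lift_mat_dvd[OF r Y1(3) W(2)] by blast
qed

theorem mainTheorem2:
  fixes \<pi> :: "'a::idom"
    and \<kappa> :: "'a^'n::finite^'n \<Rightarrow> 'a^'n^'n \<Rightarrow> 'a"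
    and r :: nat
    and E B Xc :: "'a^'n^'n"
  assumes "compact_dvr \<pi>"
    and "good_form \<pi> \<kappa>"
    and "r \<ge> 1"
    and "E \<in> sl" and "B \<in> sl" and "Xc \<in> sl"
    and "mat_cong \<pi> r B E"
    and "shadow \<pi> (r + 1) B = shadow \<pi> r E"
  shows "{Y \<in> shadow \<pi> r E. \<forall>Z \<in> shadow \<pi> r E. \<pi> dvd \<kappa> Xc (bracket Y Z)}
           = shadow \<pi> (r + 1) (B + smat (\<pi> ^ r) Xc)"
proof -
  have dvr: "is_dvr_uniformizer \<pi>" using assms(1) unfolding compact_dvr_def by simp
  then have "\<pi> \<noteq> 0" unfolding is_dvr_uniformizer_def by simp
  have shadow_E: "shadow \<pi> r E = shadow \<pi> r B" by (rule shadow_eq_of_mat_cong[OF assms(7)])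
  have stable: "shadow \<pi> (r + 1) B = shadow \<pi> r B" using assms(8) shadow_E by simp
  show ?thesis unfolding shadow_E
  proof (intro set_eqI iffI)
    fix Y assume "Y \<in> {Y \<in> shadow \<pi> r B. \<forall>Z \<in> shadow \<pi> r B. \<pi> dvd \<kappa> Xc (bracket Y Z)}"
    then show "Y \<in> shadow \<pi> (r + 1) (B + smat (\<pi> ^ r) Xc)"
      using stabilizer_subset_shadow_of_lift[OF dvr assms(2,3,5,6) stable] by blast
  next
    fix Y assume "Y \<in> shadow \<pi> (r + 1) (B + smat (\<pi> ^ r) Xc)"
    then show "Y \<in> {Y \<in> shadow \<pi> r B. \<forall>Z \<in> shadow \<pi> r B. \<pi> dvd \<kappa> Xc (bracket Y Z)}"
      using shadow_subset_of_lift shadow_of_lift_stabilizes[OF \<open>\<pi> \<noteq> 0\<close> assms(2,5,6)] stable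
      by blast
  qed
qed

end
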